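(* Under the standing assumptions below, let $\{I_j^n\}\in\mathcal C_n$ for every $n$ be such that the measures $\mu_{\{I_j^n\}}$ converge weak* in $\mathcal P(\overline I)$ to a measure $\mu$, and let $f\in L^1(I)$ be the density of the absolutely continuous part of $\mu$ with respect to Lebesgue measure. If $x_0\in I$ is a Lebesgue point of $f$ with $f(x_0)>0$, then $$\lim_{J\downarrow x_0}\frac{\mathcal L(I^a\cap J)}{\mathcal L(J)}=1\qquad\text{and}\qquad\lim_{J\downarrow x_0}\frac{\mathcal L(I^b\cap J)}{\mathcal L(J)}=0,$$ the limits being over open intervals $J$ with $x_0\in J$ shrinking to $x_0$.
   Context: $I=(0,1)$. $\mathcal C_n$ is the set of partitions $\{I_j\}_{j=1}^n$ of $I$ with $I_j=(x_{j-1},x_j)$, $0=x_0\le x_1\le\dots\le x_n=1$ (some intervals may be empty). The associated probability measure on $\overline I=[0,1]$ is $\mu_{\{I_j\}}=\frac1n\sum_{j:x_{j-1}<x_j}\frac{1}{\mathcal L(I_j)}\chi_{I_j}\mathcal L+\frac1n\sum_{j:x_{j-1}=x_j}\delta_{x_j}$, $\mathcal L$ Lebesgue measure. Weak* convergence is against continuous functions on $[0,1]$. Accumulation points: given $\{I_j^n\}\in\mathcal C_n$ for all $n$, a point $x\in I$ is an accumulation point of the partitions if for every $n$ there is an index $j_n$ with $x\in\overline{I^n_{j_n}}$ and $\lim_{n\to\infty}\mathcal L(I^n_{j_n})=0$. $I^a$ denotes the set of all accumulation points and $I^b:=I\setminus I^a$. *)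

theory Defs
  imports "HOL-Probability.Probability"
begin

text \<open>A partition in C_n is encoded by its endpoints x 0, ..., x n
  (x j = x_j), with 0 = x_0 \<le> x_1 \<le> ... \<le> x_n = 1; the j-th interval is
  I_j = (x (j-1), x j) for 1 \<le> j \<le> n.\<close>
definition is_partition :: "nat \<Rightarrow> (nat \<Rightarrow> real) \<Rightarrow> bool" where
  "is_partition n x \<longleftrightarrow> x 0 = 0 \<and> x n = 1 \<and> (\<forall>j<n. x j \<le> x (Suc j))"

text \<open>Integral of a continuous function g against the probability measure
  mu_{I_j} associated with the partition x in C_n.\<close>
definition part_integral :: "nat \<Rightarrow> (nat \<Rightarrow> real) \<Rightarrow> (real \<Rightarrow> real) \<Rightarrow> real" where
  "part_integral n x g =
     (1 / real n) * (\<Sum>j=1..n.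
        if x (j - 1) < x j then integral {x (j - 1)..x j} g / (x j - x (j - 1))
        else g (x j))"

definition accum_points :: "(nat \<Rightarrow> nat \<Rightarrow> real) \<Rightarrow> real set" where
  "accum_points P = {x \<in> {0<..<1}. \<exists>jn :: nat \<Rightarrow> nat.
      (\<forall>n\<ge>1. 1 \<le> jn n \<and> jn n \<le> n \<and> x \<in> closure {P n (jn n - 1)<..<P n (jn n)}) \<and>
      ((\<lambda>n. P n (jn n) - P n (jn n - 1)) \<longlonglongrightarrow> 0)}"

definition nonaccum_points :: "(nat \<Rightarrow> nat \<Rightarrow> real) \<Rightarrow> real set" where
  "nonaccum_points P = {0<..<1} - accum_points P"

definition lebesgue_point :: "(real \<Rightarrow> real) \<Rightarrow> real \<Rightarrow> bool" where
  "lebesgue_point f x0 \<longleftrightarrow>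
     ((\<lambda>r. (1 / (2 * r)) * (LBINT y : {x0 - r..x0 + r}. \<bar>f y - f x0\<bar>)) \<longlongrightarrow> 0) (at_right 0)"

definition density_tends :: "real set \<Rightarrow> real \<Rightarrow> real \<Rightarrow> bool" where
  "density_tends S x0 c \<longleftrightarrow>
     (\<forall>e>0. \<exists>d>0. \<forall>a b. a < x0 \<and> x0 < b \<and> b - a < d \<longrightarrow>
        \<bar>measure lebesgue (S \<inter> {a<..<b}) / (b - a) - c\<bar> < e)"

end

theory Submission
  imports Defs
begin

text \<open>A point y of (0,1) that is not an accumulation point lies, for infinitely many n, in a cell
  of length at least some \<delta> > 0; along a subsequence these cells converge to a nondegenerate
  interval [c,d] containing y. A tent supported in (c,d) sees only one cell of mass 1/n, so testing
  the weak* convergence with such tents gives \<mu>(c,d) = 0, hence f = 0 a.e. on (c,d). The union of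
  these open intervals differs from the union of the closed ones by a countable set, so f vanishes
  a.e. on the non-accumulation points. At a Lebesgue point x0 with f x0 > 0 a set on which f
  vanishes has density 0, and the accumulation points form its complement in (0,1).\<close>

lemma partition_mono:
  assumes "is_partition n x" "i \<le> k" "k \<le> n"
  shows "x i \<le> x k"
  using assms(2,3)
proof (induction k)
  case (Suc k)
  show ?case
  proof (cases "i = Suc k")
    case False
    then have "x i \<le> x k" using Suc by simp
    also have "x k \<le> x (Suc k)" using assms(1) Suc(3) unfolding is_partition_def by simp
    finally show ?thesis .
  qed simp
qed simp

lemma partition_range:
  assumes "is_partition n x" "i \<le> n"
  shows "0 \<le> x i" "x i \<le> 1"
  using partition_mono[OF assms(1), of 0 i] partition_mono[OF assms(1), of i n] assms
  unfolding is_partition_def by auto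

definition in_cell :: "(nat \<Rightarrow> real) \<Rightarrow> nat \<Rightarrow> real \<Rightarrow> nat \<Rightarrow> bool" where
  "in_cell x n y j \<longleftrightarrow> 1 \<le> j \<and> j \<le> n \<and> x (j - 1) < x j \<and> x (j - 1) \<le> y \<and> y \<le> x j"

lemma in_cell_iff_closure:
  "in_cell x n y j \<longleftrightarrow> 1 \<le> j \<and> j \<le> n \<and> y \<in> closure {x (j - 1)<..<x j}"
  by (cases "x (j - 1) < x j") (auto simp: in_cell_def)

lemma partition_covers:
  assumes "is_partition n x" "0 < y" "y \<le> 1"
  obtains j where "in_cell x n y j"
proof -
  define j where "j = (LEAST j. y \<le> x j)"
  have "y \<le> x n" using assms unfolding is_partition_def by simp
  then have "y \<le> x j" "j \<le> n"
    unfolding j_def by (auto intro: LeastI Least_le)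
  moreover have "j \<noteq> 0"
  proof
    assume "j = 0"
    with \<open>y \<le> x j\<close> assms show False unfolding is_partition_def by simp
  qed
  moreover have "\<not> y \<le> x (j - 1)"
    unfolding j_def by (rule not_less_Least) (use \<open>j \<noteq> 0\<close> j_def in auto)
  ultimately have "in_cell x n y j" unfolding in_cell_def by auto
  then show ?thesis by (rule that)
qed

definition min_cell_length :: "(nat \<Rightarrow> real) \<Rightarrow> nat \<Rightarrow> real \<Rightarrow> real" where
  "min_cell_length x n y = Min ((\<lambda>j. x j - x (j - 1)) ` {j. in_cell x n y j})"

lemma finite_in_cell: "finite {j. in_cell x n y j}"
  by (rule finite_subset[of _ "{1..n}"]) (auto simp: in_cell_def)

lemma min_cell_length_le: "in_cell x n y j \<Longrightarrow> min_cell_length x n y \<le> x j - x (j - 1)"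
  unfolding min_cell_length_def by (rule Min_le) (use finite_in_cell in auto)

lemma min_cell_length_attained:
  assumes "in_cell x n y i"
  obtains j where "in_cell x n y j" "x j - x (j - 1) = min_cell_length x n y"
proof -
  have "min_cell_length x n y \<in> (\<lambda>j. x j - x (j - 1)) ` {j. in_cell x n y j}"
    unfolding min_cell_length_def by (rule Min_in) (use finite_in_cell assms in auto)
  then show ?thesis using that by auto
qed

lemma min_cell_length_pos:
  assumes "in_cell x n y i"
  shows "0 < min_cell_length x n y"
proof -
  obtain j where "in_cell x n y j" "x j - x (j - 1) = min_cell_length x n y"
    using min_cell_length_attained[OF assms] by blast
  then show ?thesis by (simp add: in_cell_def)
qed

lemma accum_pointsI:
  assumes part: "\<And>n. n \<ge> 1 \<Longrightarrow> is_partition n (P n)" and y: "y \<in> {0<..<1}"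
    and lim: "(\<lambda>n. min_cell_length (P n) n y) \<longlonglongrightarrow> 0"
  shows "y \<in> accum_points P"
proof -
  have cells: "\<forall>n\<in>{1..}. \<exists>j. in_cell (P n) n y j \<and> P n j - P n (j - 1) = min_cell_length (P n) n y"
  proof
    fix n :: nat assume "n \<in> {1..}"
    then have n: "n \<ge> 1" by simp
    obtain i where "in_cell (P n) n y i"
      by (rule partition_covers[OF part[OF n]]) (use y in auto)
    then show "\<exists>j. in_cell (P n) n y j \<and> P n j - P n (j - 1) = min_cell_length (P n) n y"
      using min_cell_length_attained by metis
  qed
  obtain jn where jn: "\<And>n. n \<ge> 1 \<Longrightarrow>
      in_cell (P n) n y (jn n) \<and> P n (jn n) - P n (jn n - 1) = min_cell_length (P n) n y"
    using bchoice[OF cells] by (metis atLeast_iff)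
  have "(\<lambda>n. P n (jn n) - P n (jn n - 1)) \<longlonglongrightarrow> 0"
    by (rule Lim_transform_eventually[OF lim])
      (use jn in \<open>auto simp: eventually_sequentially intro!: exI[of _ 1]\<close>)
  moreover have "\<forall>n\<ge>1. 1 \<le> jn n \<and> jn n \<le> n \<and> y \<in> closure {P n (jn n - 1)<..<P n (jn n)}"
    using jn in_cell_iff_closure by blast
  ultimately show ?thesis using y unfolding accum_points_def by blast
qed

lemma accum_points_eq:
  assumes part: "\<And>n. n \<ge> 1 \<Longrightarrow> is_partition n (P n)"
  shows "accum_points P = {y \<in> {0<..<1}. \<forall>k::nat. \<exists>M. \<forall>n\<ge>M.
      \<exists>j\<in>{1..n}. in_cell (P n) n y j \<and> P n j - P n (j - 1) < 1 / Suc k}"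
    (is "_ = {y \<in> _. ?fine y}")
proof (intro set_eqI iffI)
  fix y assume "y \<in> accum_points P"
  then obtain jn where y: "y \<in> {0<..<1}"
    and jn: "\<And>n. n \<ge> 1 \<Longrightarrow> in_cell (P n) n y (jn n)"
    and lim: "(\<lambda>n. P n (jn n) - P n (jn n - 1)) \<longlonglongrightarrow> 0"
    unfolding accum_points_def in_cell_iff_closure by blast
  have "?fine y"
  proof
    fix k :: nat
    obtain M where M: "\<forall>n\<ge>M. P n (jn n) - P n (jn n - 1) < 1 / Suc k"
      using lim[THEN order_tendstoD(2), of "1 / Suc k"] unfolding eventually_sequentially by auto
    show "\<exists>M. \<forall>n\<ge>M. \<exists>j\<in>{1..n}. in_cell (P n) n y j \<and> P n j - P n (j - 1) < 1 / Suc k"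
    proof (intro exI[of _ "max M 1"] allI impI)
      fix n assume "max M 1 \<le> n"
      then show "\<exists>j\<in>{1..n}. in_cell (P n) n y j \<and> P n j - P n (j - 1) < 1 / Suc k"
        using jn[of n] M by (intro bexI[of _ "jn n"]) (auto simp: in_cell_def)
    qed
  qed
  with y show "y \<in> {y \<in> {0<..<1}. ?fine y}" by blast
next
  fix y assume "y \<in> {y \<in> {0<..<1}. ?fine y}"
  then have y: "y \<in> {0<..<1}" and fine: "?fine y" by auto
  have "(\<lambda>n. min_cell_length (P n) n y) \<longlonglongrightarrow> 0"
  proof (rule LIMSEQ_I)
    fix r :: real assume "0 < r"
    then obtain k where k: "inverse (real (Suc k)) < r" using reals_Archimedean by blast
    obtain M where M: "\<forall>n\<ge>M. \<exists>j\<in>{1..n}. in_cell (P n) n y j \<and> P n j - P n (j - 1) < 1 / Suc k"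
      using fine by blast
    have "norm (min_cell_length (P n) n y - 0) < r" if n: "n \<ge> M" for n
    proof -
      obtain j where j: "in_cell (P n) n y j" "P n j - P n (j - 1) < 1 / Suc k"
        using M n by blast
      then show ?thesis
        using min_cell_length_le[OF j(1)] min_cell_length_pos[OF j(1)] k
        by (simp add: inverse_eq_divide)
    qed
    then show "\<exists>M. \<forall>n\<ge>M. norm (min_cell_length (P n) n y - 0) < r" by blast
  qed
  then show "y \<in> accum_points P" using accum_pointsI[OF part y] by blast
qed

lemma accum_points_borel:
  assumes "\<And>n. n \<ge> 1 \<Longrightarrow> is_partition n (P n)"
  shows "accum_points P \<in> sets borel"
  by (subst accum_points_eq[OF assms]) (unfold in_cell_def, measurable)

lemma nonaccum_point_coarse_cells:
  assumes part: "\<And>n. n \<ge> 1 \<Longrightarrow> is_partition n (P n)"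
    and y: "y \<in> {0<..<1}" "y \<notin> accum_points P"
  obtains \<delta> :: real and \<sigma> j :: "nat \<Rightarrow> nat" where "\<delta> > 0" "\<And>k. \<sigma> k \<ge> Suc k"
    "\<And>k. in_cell (P (\<sigma> k)) (\<sigma> k) y (j k)" "\<And>k. \<delta> \<le> P (\<sigma> k) (j k) - P (\<sigma> k) (j k - 1)"
proof -
  have cell: "\<exists>j. in_cell (P n) n y j" if "n \<ge> 1" for n
    by (rule partition_covers[OF part[OF that]]) (use y in auto)
  have "\<not> (\<lambda>n. min_cell_length (P n) n y) \<longlonglongrightarrow> 0"
    using accum_pointsI[OF part y(1)] y(2) by blast
  then obtain \<delta> where \<delta>: "\<delta> > 0" "\<And>M. \<exists>n\<ge>M. \<delta> \<le> \<bar>min_cell_length (P n) n y\<bar>"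
    unfolding LIMSEQ_iff by (auto simp: not_less)
  have "\<exists>n j. n \<ge> Suc k \<and> in_cell (P n) n y j \<and> \<delta> \<le> P n j - P n (j - 1)" for k
  proof -
    obtain n where n: "n \<ge> Suc k" "\<delta> \<le> \<bar>min_cell_length (P n) n y\<bar>" using \<delta>(2) by blast
    then obtain i where i: "in_cell (P n) n y i" using cell by fastforce
    then obtain j where j: "in_cell (P n) n y j" "P n j - P n (j - 1) = min_cell_length (P n) n y"
      by (rule min_cell_length_attained)
    show ?thesis
      using n j min_cell_length_pos[OF i] by (intro exI[of _ n] exI[of _ j]) auto
  qed
  then obtain \<sigma> j where "\<And>k. \<sigma> k \<ge> Suc k \<and> in_cell (P (\<sigma> k)) (\<sigma> k) y (j k)
      \<and> \<delta> \<le> P (\<sigma> k) (j k) - P (\<sigma> k) (j k - 1)"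
    by metis
  with \<delta>(1) show ?thesis using that by blast
qed

definition tent :: "real \<Rightarrow> real \<Rightarrow> real \<Rightarrow> real" where
  "tent \<alpha> \<beta> y = max 0 (min (y - \<alpha>) (\<beta> - y))"

lemma continuous_on_tent: "continuous_on S (tent \<alpha> \<beta>)"
  unfolding tent_def by (intro continuous_intros)

lemma borel_measurable_tent [measurable]: "tent \<alpha> \<beta> \<in> borel_measurable borel"
  unfolding tent_def by measurable

lemma tent_bounds: "0 \<le> tent \<alpha> \<beta> y" "\<alpha> < \<beta> \<Longrightarrow> tent \<alpha> \<beta> y \<le> \<beta> - \<alpha>"
  unfolding tent_def by auto

lemma tent_eq_0: "y \<le> \<alpha> \<or> \<beta> \<le> y \<Longrightarrow> tent \<alpha> \<beta> y = 0"
  unfolding tent_def by auto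

lemma tent_pos: "\<alpha> < y \<Longrightarrow> y < \<beta> \<Longrightarrow> 0 < tent \<alpha> \<beta> y"
  unfolding tent_def by auto

text \<open>A tent strictly inside one cell sees only that cell, which carries mass 1/n.\<close>
lemma part_integral_tent_bounds:
  assumes part: "is_partition n x" and j: "1 \<le> j" "j \<le> n"
    and ab: "x (j - 1) < \<alpha>" "\<alpha> < \<beta>" "\<beta> < x j"
  shows "0 \<le> part_integral n x (tent \<alpha> \<beta>)" "part_integral n x (tent \<alpha> \<beta>) \<le> (\<beta> - \<alpha>) / n"
proof -
  let ?g = "tent \<alpha> \<beta>"
  define t where "t i = (if x (i - 1) < x i then integral {x (i - 1)..x i} ?g / (x i - x (i - 1))
    else ?g (x i))" for i
  have int: "?g integrable_on {a..b}" for a b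
    by (rule integrable_continuous_interval, rule continuous_on_tent)
  have "t i = 0" if i: "i \<in> {1..n}" "i \<noteq> j" for i
  proof -
    have "x i \<le> x (j - 1) \<or> x j \<le> x (i - 1)"
      using partition_mono[OF part, of i "j - 1"] partition_mono[OF part, of j "i - 1"] i j
      by (cases "i < j") auto
    then have zero: "?g y = 0" if "y \<in> {x (i - 1)..x i}" for y
      using that ab by (intro tent_eq_0) auto
    have "integral {x (i - 1)..x i} ?g = integral {x (i - 1)..x i} (\<lambda>_. 0)"
      by (rule integral_cong) (rule zero)
    then have "integral {x (i - 1)..x i} ?g = 0" by simp
    then show ?thesis using zero[of "x i"] partition_mono[OF part, of "i - 1" i] i
      unfolding t_def by auto
  qed
  then have sum: "(\<Sum>i=1..n. t i) = t j"
    using sum.mono_neutral_right[of "{1..n}" "{j}" t] j by auto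
  have "0 \<le> integral {x (j - 1)..x j} ?g"
    by (rule integral_nonneg[OF int]) (simp add: tent_bounds)
  moreover have "integral {x (j - 1)..x j} ?g \<le> integral {x (j - 1)..x j} (\<lambda>_. \<beta> - \<alpha>)"
    by (rule integral_le[OF int]) (use tent_bounds ab in auto)
  ultimately have "0 \<le> t j" "t j \<le> \<beta> - \<alpha>"
    using ab unfolding t_def by (auto simp: field_simps)
  moreover have "part_integral n x ?g = t j / n"
    unfolding part_integral_def t_def[symmetric] sum by simp
  ultimately show "0 \<le> part_integral n x ?g" "part_integral n x ?g \<le> (\<beta> - \<alpha>) / n"
    by (auto simp: divide_right_mono)
qed

lemma AE_not_in_if_integral_tent_eq_0:
  assumes M: "finite_measure M" and meas: "tent \<alpha> \<beta> \<in> borel_measurable M"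
    and "\<alpha> < \<beta>" and zero: "integral\<^sup>L M (tent \<alpha> \<beta>) = 0"
  shows "AE y in M. y \<notin> {\<alpha><..<\<beta>}"
proof -
  interpret finite_measure M by (rule M)
  have "integrable M (tent \<alpha> \<beta>)"
    by (rule integrable_const_bound[where B="\<beta> - \<alpha>"]) (use tent_bounds \<open>\<alpha> < \<beta>\<close> meas in auto)
  then have "AE y in M. tent \<alpha> \<beta> y = 0"
    using integral_nonneg_eq_0_iff_AE zero tent_bounds(1) by blast
  then show ?thesis by eventually_elim (auto dest: tent_pos)
qed

lemma emeasure_Ioo_eq_0_if_integral_tent_eq_0:
  fixes c d :: real
  assumes M: "finite_measure M" and meas: "\<And>\<alpha> \<beta>. tent \<alpha> \<beta> \<in> borel_measurable M"
    and cd: "c < d" "{c<..<d} \<in> sets M"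
    and zero: "\<And>\<alpha> \<beta>. c < \<alpha> \<Longrightarrow> \<alpha> < \<beta> \<Longrightarrow> \<beta> < d \<Longrightarrow> integral\<^sup>L M (tent \<alpha> \<beta>) = 0"
  shows "emeasure M {c<..<d} = 0"
proof -
  define e where "e m = (d - c) / (real m + 3)" for m :: nat
  have e: "0 < e m" "e m < (d - c) / 2" for m
  proof -
    show "0 < e m" unfolding e_def using cd by simp
    show "e m < (d - c) / 2" unfolding e_def by (rule divide_strict_left_mono) (use cd in auto)
  qed
  have e_lim: "e \<longlonglongrightarrow> 0"
    unfolding e_def
    by (intro tendsto_divide_0[OF tendsto_const] filterlim_at_top_imp_at_infinity
        filterlim_at_top_mono[OF filterlim_real_sequentially]) auto
  have "AE y in M. \<forall>m. y \<notin> {c + e m<..<d - e m}"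
  proof (rule AE_all_countable[THEN iffD2], intro allI AE_not_in_if_integral_tent_eq_0[OF M meas])
    fix m
    show "c + e m < d - e m" using e[of m] by (simp add: field_simps)
    then show "integral\<^sup>L M (tent (c + e m) (d - e m)) = 0"
      using e[of m] by (intro zero) auto
  qed
  then have "AE y in M. y \<notin> {c<..<d}"
  proof eventually_elim
    case (elim y)
    show ?case
    proof
      assume y: "y \<in> {c<..<d}"
      then obtain m where "e m < min (y - c) (d - y)"
        using order_tendstoD(2)[OF e_lim, of "min (y - c) (d - y)"]
        unfolding eventually_sequentially by auto
      with y elim[rule_format, of m] show False by auto
    qed
  qed
  moreover have "{y \<in> space M. y \<in> {c<..<d}} = {c<..<d}"
    using sets.sets_into_space[OF cd(2)] by auto
  ultimately show ?thesis using AE_iff_measurable[OF cd(2)] by auto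
qed

lemma AE_Union_open:
  fixes \<F> :: "'a::second_countable_topology set set"
  assumes "\<And>S. S \<in> \<F> \<Longrightarrow> open S" and AE: "\<And>S. S \<in> \<F> \<Longrightarrow> AE x in M. x \<in> S \<longrightarrow> Q x"
  shows "AE x in M. x \<in> \<Union>\<F> \<longrightarrow> Q x"
proof -
  obtain \<F>' where \<F>': "\<F>' \<subseteq> \<F>" "countable \<F>'" "\<Union>\<F>' = \<Union>\<F>"
    using assms(1) by (rule Lindelof)
  have "\<forall>S\<in>\<F>'. AE x in M. x \<in> S \<longrightarrow> Q x" using AE \<F>'(1) by blast
  then have "AE x in M. \<forall>S\<in>\<F>'. x \<in> S \<longrightarrow> Q x"
    by (rule AE_ball_countable[OF \<F>'(2), THEN iffD2])
  then show ?thesis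
    by eventually_elim (use \<F>'(3) in blast)
qed

lemma countable_if_right_gaps:
  fixes S :: "real set"
  assumes gap: "\<And>x. x \<in> S \<Longrightarrow> \<exists>d>x. {x<..<d} \<inter> S = {}"
  shows "countable S"
proof -
  obtain g where g: "\<And>x. x \<in> S \<Longrightarrow> x < g x \<and> {x<..<g x} \<inter> S = {}"
    using gap by metis
  have disj: "disjnt {x<..<g x} {y<..<g y}" if "x \<in> S" "y \<in> S" "x < y" for x y
    using g[OF that(1)] that by (force simp: disjnt_def)
  have distinct: "disjnt {x<..<g x} {y<..<g y}" if "x \<in> S" "y \<in> S" "x \<noteq> y" for x y
    using disj[of x y] disj[of y x] that by (cases "x < y") (auto simp: disjnt_sym)
  have "countable ((\<lambda>x. {x<..<g x}) ` S)"
    by (rule countable_disjoint_open_subsets) (auto intro: pairwise_imageI distinct)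
  moreover have "inj_on (\<lambda>x. {x<..<g x}) S"
  proof (rule inj_onI, rule ccontr)
    fix x y assume "x \<in> S" "y \<in> S" "{x<..<g x} = {y<..<g y}" "x \<noteq> y"
    with distinct[of x y] g[of x] show False by (auto simp: disjnt_def)
  qed
  ultimately show ?thesis by (rule countable_image_inj_on)
qed

lemma countable_if_left_gaps:
  fixes S :: "real set"
  assumes gap: "\<And>x. x \<in> S \<Longrightarrow> \<exists>c<x. {c<..<x} \<inter> S = {}"
  shows "countable S"
proof -
  have "countable (uminus ` S)"
  proof (rule countable_if_right_gaps)
    fix x assume "x \<in> uminus ` S"
    then obtain c where "c < - x" "{c<..< - x} \<inter> S = {}" using gap by force
    then have "- c > x" "{x<..< - c} \<inter> uminus ` S = {}" by force+
    then show "\<exists>d>x. {x<..<d} \<inter> uminus ` S = {}" by blast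
  qed
  then show ?thesis by (simp add: countable_image_inj_eq)
qed

lemma countable_Union_Icc_diff_Union_Ioo:
  fixes Z :: "(real \<times> real) set"
  assumes "\<And>p. p \<in> Z \<Longrightarrow> fst p < snd p"
  shows "countable ((\<Union>p\<in>Z. {fst p..snd p}) - (\<Union>p\<in>Z. {fst p<..<snd p}))"
proof -
  define U where "U = (\<Union>p\<in>Z. {fst p<..<snd p})"
  have ivl: "fst p < snd p" "{fst p<..<snd p} \<subseteq> U" if "p \<in> Z" for p
    using assms that unfolding U_def by auto
  have "countable (fst ` Z - U)"
  proof (rule countable_if_right_gaps)
    fix x assume "x \<in> fst ` Z - U"
    then obtain p where "p \<in> Z" "x = fst p" by blast
    with ivl[OF \<open>p \<in> Z\<close>] show "\<exists>d>x. {x<..<d} \<inter> (fst ` Z - U) = {}" by blast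
  qed
  moreover have "countable (snd ` Z - U)"
  proof (rule countable_if_left_gaps)
    fix x assume "x \<in> snd ` Z - U"
    then obtain p where "p \<in> Z" "x = snd p" by blast
    with ivl[OF \<open>p \<in> Z\<close>] show "\<exists>c<x. {c<..<x} \<inter> (snd ` Z - U) = {}" by blast
  qed
  moreover have "(\<Union>p\<in>Z. {fst p..snd p}) - U \<subseteq> (fst ` Z - U) \<union> (snd ` Z - U)"
  proof
    fix y assume y: "y \<in> (\<Union>p\<in>Z. {fst p..snd p}) - U"
    then obtain p where p: "p \<in> Z" "fst p \<le> y" "y \<le> snd p" by auto
    have "y \<notin> {fst p<..<snd p}" using y ivl(2)[OF p(1)] by blast
    then have "y = fst p \<or> y = snd p" using p by auto
    then show "y \<in> (fst ` Z - U) \<union> (snd ` Z - U)" using p(1) y by auto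
  qed
  ultimately show ?thesis unfolding U_def[symmetric] by (meson countable_Un countable_subset)
qed

lemma bounded_intervals_convergent_subseq:
  fixes cs ds :: "nat \<Rightarrow> real"
  assumes "\<And>k. a \<le> cs k" "\<And>k. cs k \<le> y" "\<And>k. y \<le> ds k" "\<And>k. ds k \<le> b"
    and "\<delta> > 0" "\<And>k. \<delta> \<le> ds k - cs k"
  obtains r c d where "strict_mono r" "(cs \<circ> r) \<longlonglongrightarrow> c" "(ds \<circ> r) \<longlonglongrightarrow> d"
    "a \<le> c" "c \<le> y" "y \<le> d" "d \<le> b" "c < d"
proof -
  have "seq_compact ({a..b} \<times> {a..b})"
    by (intro compact_imp_seq_compact compact_Times compact_Icc)
  moreover have "\<forall>k. (cs k, ds k) \<in> {a..b} \<times> {a..b}"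
  proof
    fix k
    show "(cs k, ds k) \<in> {a..b} \<times> {a..b}" using assms(1-4)[of k] by auto
  qed
  ultimately obtain l r where r: "strict_mono r" and lim: "((\<lambda>k. (cs k, ds k)) \<circ> r) \<longlonglongrightarrow> l"
    and l: "l \<in> {a..b} \<times> {a..b}"
    by (rule seq_compactE) blast
  obtain c d where l_eq: "l = (c, d)" by fastforce
  have c: "(cs \<circ> r) \<longlonglongrightarrow> c" using tendsto_fst[OF lim] l_eq by (simp add: o_def)
  have d: "(ds \<circ> r) \<longlonglongrightarrow> d" using tendsto_snd[OF lim] l_eq by (simp add: o_def)
  have "c \<le> y" by (rule LIMSEQ_le_const2[OF c]) (use assms in auto)
  moreover have "y \<le> d" by (rule LIMSEQ_le_const[OF d]) (use assms in auto)
  moreover have "\<delta> \<le> d - c" by (rule LIMSEQ_le_const[OF tendsto_diff[OF d c]]) (use assms in auto)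
  ultimately show ?thesis using that r c d l l_eq \<open>\<delta> > 0\<close> by auto
qed

lemma measure_mult_le_set_integral_of_zero_set:
  fixes f :: "real \<Rightarrow> real"
  assumes f_meas: "f \<in> borel_measurable borel"
    and K: "K \<in> sets borel" "emeasure lborel K < \<infinity>" and f_int: "set_integrable lborel K f"
    and Z: "Z \<in> sets borel" "Z \<subseteq> K" and Z_zero: "AE y in lborel. y \<in> Z \<longrightarrow> f y = 0"
  shows "measure lborel Z * \<bar>c\<bar> \<le> (LINT y : K | lborel. \<bar>f y - c\<bar>)"
proof -
  let ?g = "\<lambda>y. \<bar>f y - c\<bar>"
  have "emeasure lborel Z \<le> emeasure lborel K" using Z K by (intro emeasure_mono) auto
  then have Z_fin: "emeasure lborel Z \<noteq> \<infinity>" using K by (auto simp: top_unique)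
  have gK: "set_integrable lborel K ?g"
  proof (intro set_integrable_abs set_integral_diff(1) f_int)
    show "set_integrable lborel K (\<lambda>_. c)" unfolding set_integrable_def using K by simp
  qed
  have "measure lborel Z * \<bar>c\<bar> = (LINT y : Z | lborel. \<bar>c\<bar>)"
    using set_integral_const[OF _ Z_fin, of "\<bar>c\<bar>"] Z by simp
  also have "\<dots> = (LINT y : Z | lborel. ?g y)"
    by (rule set_lebesgue_integral_cong_AE) (use Z Z_zero f_meas in auto)
  also have "\<dots> \<le> (LINT y : K | lborel. ?g y)"
    using gK set_integrable_subset[OF gK _ Z(2)] Z
    unfolding set_lebesgue_integral_def set_integrable_def
    by (intro integral_mono) (auto simp: indicator_def)
  finally show ?thesis .
qed

lemma density_tends_zero_at_lebesgue_point:
  fixes f :: "real \<Rightarrow> real"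
  assumes leb: "lebesgue_point f x0" and fx0: "f x0 \<noteq> 0"
    and f_meas: "f \<in> borel_measurable borel"
    and T: "open T" "x0 \<in> T" and f_int: "set_integrable lborel T f"
    and Z: "Z \<in> sets borel" and Z_zero: "AE y in lborel. y \<in> Z \<longrightarrow> f y = 0"
  shows "density_tends Z x0 0"
  unfolding density_tends_def
proof (intro allI impI)
  fix e :: real assume e: "e > 0"
  define \<eta> where "\<eta> = e * \<bar>f x0\<bar> / 2"
  have "\<eta> > 0" using e fx0 unfolding \<eta>_def by simp
  then obtain r0 where r0: "r0 > 0" "\<And>r. 0 < r \<Longrightarrow> r < r0 \<Longrightarrow>
      (1 / (2 * r)) * (LBINT y : {x0 - r..x0 + r}. \<bar>f y - f x0\<bar>) < \<eta>"
    using order_tendstoD(2)[OF leb[unfolded lebesgue_point_def]]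
    unfolding eventually_at_right_field by auto
  obtain \<epsilon> where \<epsilon>: "\<epsilon> > 0" "cball x0 \<epsilon> \<subseteq> T"
    using open_contains_cball T by blast
  show "\<exists>d>0. \<forall>a b. a < x0 \<and> x0 < b \<and> b - a < d \<longrightarrow>
          \<bar>measure lebesgue (Z \<inter> {a<..<b}) / (b - a) - 0\<bar> < e"
  proof (intro exI[of _ "min r0 \<epsilon>"] conjI allI impI)
    show "min r0 \<epsilon> > 0" using r0 \<epsilon> by simp
    fix a b assume ab: "a < x0 \<and> x0 < b \<and> b - a < min r0 \<epsilon>"
    define r where "r = b - a"
    have r: "0 < r" "r < r0" using ab unfolding r_def by auto
    have KT: "{x0 - r..x0 + r} \<subseteq> T"
      using \<epsilon>(2) ab unfolding r_def cball_eq_atLeastAtMost[symmetric] by auto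
    have "measure lborel (Z \<inter> {a<..<b}) * \<bar>f x0\<bar>
        \<le> (LBINT y : {x0 - r..x0 + r}. \<bar>f y - f x0\<bar>)"
      using ab Z r unfolding r_def
      by (intro measure_mult_le_set_integral_of_zero_set f_meas Z_zero[THEN eventually_mono]
          set_integrable_subset[OF f_int _ KT[unfolded r_def]]) auto
    also have "\<dots> < r * e * \<bar>f x0\<bar>"
      using r0(2)[OF r] r unfolding \<eta>_def by (simp add: field_simps)
    finally have "measure lborel (Z \<inter> {a<..<b}) < r * e"
      using fx0 by simp
    then show "\<bar>measure lebesgue (Z \<inter> {a<..<b}) / (b - a) - 0\<bar> < e"
      using r Z by (simp add: r_def[symmetric] field_simps)
  qed
qed

lemma density_tends_Diff_one:
  assumes T: "open T" "x0 \<in> T" and B: "B \<in> sets lebesgue" and dB: "density_tends B x0 0"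
  shows "density_tends (T - B) x0 1"
  unfolding density_tends_def
proof (intro allI impI)
  fix e :: real assume "e > 0"
  then obtain d where d: "d > 0" and small: "\<And>a b. a < x0 \<and> x0 < b \<and> b - a < d \<Longrightarrow>
      \<bar>measure lebesgue (B \<inter> {a<..<b}) / (b - a)\<bar> < e"
    using dB unfolding density_tends_def by (metis diff_zero)
  obtain \<epsilon> where \<epsilon>: "\<epsilon> > 0" "ball x0 \<epsilon> \<subseteq> T"
    using open_contains_ball T by blast
  show "\<exists>d>0. \<forall>a b. a < x0 \<and> x0 < b \<and> b - a < d \<longrightarrow>
          \<bar>measure lebesgue ((T - B) \<inter> {a<..<b}) / (b - a) - 1\<bar> < e"
  proof (intro exI[of _ "min d \<epsilon>"] conjI allI impI)
    show "min d \<epsilon> > 0" using d \<epsilon> by simp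
    fix a b assume ab: "a < x0 \<and> x0 < b \<and> b - a < min d \<epsilon>"
    have "{a<..<b} \<subseteq> ball x0 \<epsilon>" using ab by (auto simp: dist_real_def)
    then have "(T - B) \<inter> {a<..<b} = {a<..<b} - B \<inter> {a<..<b}" using \<epsilon>(2) by auto
    moreover have "measure lebesgue ({a<..<b} - B \<inter> {a<..<b})
        = measure lebesgue {a<..<b} - measure lebesgue (B \<inter> {a<..<b})"
      by (rule measure_Diff) (use B ab in auto)
    ultimately have "measure lebesgue ((T - B) \<inter> {a<..<b}) = (b - a) - measure lebesgue (B \<inter> {a<..<b})"
      using ab by simp
    then have "measure lebesgue ((T - B) \<inter> {a<..<b}) / (b - a) - 1
        = - (measure lebesgue (B \<inter> {a<..<b}) / (b - a))"
      using ab by (simp add: diff_divide_distrib)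
    then show "\<bar>measure lebesgue ((T - B) \<inter> {a<..<b}) / (b - a) - 1\<bar> < e"
      using small[of a b] ab by (simp only: abs_minus_cancel) simp
  qed
qed

locale weak_limit_of_partitions =
  fixes P :: "nat \<Rightarrow> nat \<Rightarrow> real" and \<mu> :: "real measure"
  assumes part: "\<And>n. n \<ge> 1 \<Longrightarrow> is_partition n (P n)"
    and prob: "prob_space \<mu>"
    and sets_mu: "sets \<mu> = sets (restrict_space borel {0..1})"
    and weak: "\<And>g. continuous_on {0..1} g \<Longrightarrow>
      (\<lambda>n. part_integral n (P n) g) \<longlonglongrightarrow> integral\<^sup>L \<mu> g"
begin

lemma borel_measurable_mu: "g \<in> borel_measurable borel \<Longrightarrow> g \<in> borel_measurable \<mu>"
  using measurable_restrict_space1 measurable_cong_sets[OF sets_mu refl] by blast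

lemma sets_mu_Ioo: "0 \<le> c \<Longrightarrow> d \<le> 1 \<Longrightarrow> {c<..<d} \<in> sets \<mu>"
  unfolding sets_mu by (subst sets_restrict_space_iff) auto

lemma integral_tent_eq_0:
  assumes \<tau>: "filterlim \<tau> at_top sequentially" and j: "\<And>k. 1 \<le> j k \<and> j k \<le> \<tau> k"
    and c: "(\<lambda>k. P (\<tau> k) (j k - 1)) \<longlonglongrightarrow> c" and d: "(\<lambda>k. P (\<tau> k) (j k)) \<longlonglongrightarrow> d"
    and \<alpha>\<beta>: "c < \<alpha>" "\<alpha> < \<beta>" "\<beta> < d"
  shows "integral\<^sup>L \<mu> (tent \<alpha> \<beta>) = 0"
proof -
  let ?s = "\<lambda>k. part_integral (\<tau> k) (P (\<tau> k)) (tent \<alpha> \<beta>)"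
  have "?s \<longlonglongrightarrow> integral\<^sup>L \<mu> (tent \<alpha> \<beta>)"
    using filterlim_compose[OF weak[OF continuous_on_tent] \<tau>] by (simp add: o_def)
  moreover have "?s \<longlonglongrightarrow> 0"
  proof (rule tendsto_sandwich[OF _ _ tendsto_const])
    have "eventually (\<lambda>k. P (\<tau> k) (j k - 1) < \<alpha>) sequentially"
      "eventually (\<lambda>k. \<beta> < P (\<tau> k) (j k)) sequentially"
      using c d \<alpha>\<beta> by (auto dest: order_tendstoD)
    then have "eventually (\<lambda>k. 0 \<le> ?s k \<and> ?s k \<le> (\<beta> - \<alpha>) / \<tau> k) sequentially"
    proof eventually_elim
      case (elim k)
      have "is_partition (\<tau> k) (P (\<tau> k))" using part j[of k] by simp
      from part_integral_tent_bounds[OF this _ _ elim(1) \<alpha>\<beta>(2) elim(2)] j[of k]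
      show ?case by simp
    qed
    then show "eventually (\<lambda>k. 0 \<le> ?s k) sequentially"
      "eventually (\<lambda>k. ?s k \<le> (\<beta> - \<alpha>) / \<tau> k) sequentially"
      by (auto elim: eventually_mono)
    have "filterlim (\<lambda>k. real (\<tau> k)) at_top sequentially"
      using filterlim_compose[OF filterlim_real_sequentially \<tau>] by simp
    then show "(\<lambda>k. (\<beta> - \<alpha>) / \<tau> k) \<longlonglongrightarrow> 0"
      by (intro tendsto_divide_0[OF tendsto_const] filterlim_at_top_imp_at_infinity)
  qed
  ultimately show ?thesis by (rule LIMSEQ_unique)
qed

lemma null_interval_at_nonaccum_point:
  assumes y: "y \<in> {0<..<1}" "y \<notin> accum_points P"
  obtains c d where "c < d" "0 \<le> c" "d \<le> 1" "c \<le> y" "y \<le> d" "emeasure \<mu> {c<..<d} = 0"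
proof -
  obtain \<delta> \<sigma> j where \<delta>: "\<delta> > 0" and \<sigma>: "\<And>k. \<sigma> k \<ge> Suc k"
    and cell: "\<And>k. in_cell (P (\<sigma> k)) (\<sigma> k) y (j k)"
    and long: "\<And>k. \<delta> \<le> P (\<sigma> k) (j k) - P (\<sigma> k) (j k - 1)"
    using nonaccum_point_coarse_cells[OF part y] by blast
  have lo: "0 \<le> P (\<sigma> k) (j k - 1)" and hi: "P (\<sigma> k) (j k) \<le> 1" for k
    using partition_range[OF part] cell[of k] \<sigma>[of k] unfolding in_cell_def by auto
  have "P (\<sigma> k) (j k - 1) \<le> y" "y \<le> P (\<sigma> k) (j k)" for k
    using cell[of k] unfolding in_cell_def by auto
  then obtain r c d where r: "strict_mono r"
    and c: "((\<lambda>k. P (\<sigma> k) (j k - 1)) \<circ> r) \<longlonglongrightarrow> c" and d: "((\<lambda>k. P (\<sigma> k) (j k)) \<circ> r) \<longlonglongrightarrow> d"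
    and cd: "0 \<le> c" "c \<le> y" "y \<le> d" "d \<le> 1" "c < d"
    by (rule bounded_intervals_convergent_subseq[OF lo _ _ hi \<delta> long])
  have \<tau>: "filterlim (\<lambda>k. \<sigma> (r k)) at_top sequentially"
    by (rule filterlim_at_top_mono[OF filterlim_ident])
      (use seq_suble[OF r] \<sigma> in \<open>auto intro: always_eventually order_trans[OF _ Suc_leD]\<close>)
  have "emeasure \<mu> {c<..<d} = 0"
  proof (rule emeasure_Ioo_eq_0_if_integral_tent_eq_0)
    show "finite_measure \<mu>" using prob by (rule prob_space.finite_measure)
    show "tent \<alpha> \<beta> \<in> borel_measurable \<mu>" for \<alpha> \<beta>
      by (rule borel_measurable_mu) (rule borel_measurable_tent)
    show "{c<..<d} \<in> sets \<mu>" using cd by (intro sets_mu_Ioo) auto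
    show "integral\<^sup>L \<mu> (tent \<alpha> \<beta>) = 0" if "c < \<alpha>" "\<alpha> < \<beta>" "\<beta> < d" for \<alpha> \<beta>
      by (rule integral_tent_eq_0[OF \<tau> _ c[unfolded o_def] d[unfolded o_def] that])
        (use cell in \<open>auto simp: in_cell_def\<close>)
  qed (rule \<open>c < d\<close>)
  with cd that show ?thesis by blast
qed

end

locale weak_limit_with_density = weak_limit_of_partitions +
  fixes f :: "real \<Rightarrow> real" and N :: "real set"
  assumes f_meas: "f \<in> borel_measurable borel"
    and f_nonneg: "AE y in lborel. y \<in> {0<..<1} \<longrightarrow> f y \<ge> 0"
    and N_borel: "N \<in> sets borel" and N_null: "emeasure lborel N = 0"
    and decomp: "\<And>A. A \<in> sets \<mu> \<Longrightarrow>
      emeasure \<mu> A = (\<integral>\<^sup>+ y. ennreal (f y) * indicator (A - N) y \<partial>lborel) + emeasure \<mu> (A \<inter> N)"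
begin

lemma AE_zero_on_null_set:
  assumes A: "A \<in> sets \<mu>" "A \<subseteq> {0<..<1}" and null: "emeasure \<mu> A = 0"
  shows "AE y in lborel. y \<in> A \<longrightarrow> f y = 0"
proof -
  have "A \<in> sets borel"
    using A(1) unfolding sets_mu by (subst (asm) sets_restrict_space_iff) auto
  then have "AE y in lborel. ennreal (f y) * indicator (A - N) y = 0"
    using decomp[OF A(1)] null f_meas N_borel by (subst nn_integral_0_iff_AE[symmetric]) auto
  moreover have "AE y in lborel. y \<notin> N"
    using N_null N_borel by (intro AE_not_in) (auto simp: null_sets_def)
  ultimately show ?thesis using f_nonneg
  proof eventually_elim
    case (elim y)
    show ?case
    proof
      assume "y \<in> A"
      with elim have "f y \<le> 0" "f y \<ge> 0" using A(2) by (auto simp: ennreal_eq_0_iff)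
      then show "f y = 0" by simp
    qed
  qed
qed

lemma AE_zero_on_nonaccum_points: "AE y in lborel. y \<in> nonaccum_points P \<longrightarrow> f y = 0"
proof -
  define Z where "Z = {p. fst p < snd p \<and> 0 \<le> fst p \<and> snd p \<le> 1 \<and> emeasure \<mu> {fst p<..<snd p} = 0}"
  have open_part: "AE y in lborel. y \<in> (\<Union>p\<in>Z. {fst p<..<snd p}) \<longrightarrow> f y = 0"
  proof (rule AE_Union_open)
    fix S assume "S \<in> (\<lambda>p. {fst p<..<snd p}) ` Z"
    then obtain c d where S: "S = {c<..<d}" and "0 \<le> c" "d \<le> 1" "emeasure \<mu> {c<..<d} = 0"
      unfolding Z_def by auto
    then show "AE y in lborel. y \<in> S \<longrightarrow> f y = 0"
      using sets_mu_Ioo by (intro AE_zero_on_null_set) auto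
    show "open S" using S by simp
  qed
  have endpoints: "AE y in lborel. y \<notin> (\<Union>p\<in>Z. {fst p..snd p}) - (\<Union>p\<in>Z. {fst p<..<snd p})"
    by (intro AE_not_in countable_imp_null_set_lborel countable_Union_Icc_diff_Union_Ioo)
      (simp add: Z_def)
  have covered: "y \<in> (\<Union>p\<in>Z. {fst p..snd p})" if y: "y \<in> nonaccum_points P" for y
  proof -
    obtain c d where "c < d" "0 \<le> c" "d \<le> 1" "c \<le> y" "y \<le> d" "emeasure \<mu> {c<..<d} = 0"
      by (rule null_interval_at_nonaccum_point) (use y in \<open>auto simp: nonaccum_points_def\<close>)
    then have "(c, d) \<in> Z" "y \<in> {fst (c, d)..snd (c, d)}" unfolding Z_def by simp_all
    then show ?thesis by blast
  qed
  from open_part endpoints show ?thesis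
  proof eventually_elim
    case (elim y)
    then show ?case using covered by blast
  qed
qed

end

theorem lemma2p4:
  fixes P :: "nat \<Rightarrow> nat \<Rightarrow> real" and \<mu> :: "real measure"
    and f :: "real \<Rightarrow> real" and N :: "real set" and x0 :: real
  assumes part: "\<And>n. n \<ge> 1 \<Longrightarrow> is_partition n (P n)"
    and prob: "prob_space \<mu>"
    and sets_mu: "sets \<mu> = sets (restrict_space borel {0..1})"
    and space_mu: "space \<mu> = {0..1}"
    and weak: "\<And>g. continuous_on {0..1} g \<Longrightarrow>
                 (\<lambda>n. part_integral n (P n) g) \<longlonglongrightarrow> integral\<^sup>L \<mu> g"
    and f_meas: "f \<in> borel_measurable borel"
    and f_nonneg: "AE y in lborel. y \<in> {0<..<1} \<longrightarrow> f y \<ge> 0"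
    and f_int: "set_integrable lborel {0<..<1} f"
    and N_borel: "N \<in> sets borel" and N_sub: "N \<subseteq> {0..1}"
    and N_null: "emeasure lborel N = 0"
    and decomp: "\<And>A. A \<in> sets \<mu> \<Longrightarrow>
                   emeasure \<mu> A = (\<integral>\<^sup>+ y. ennreal (f y) * indicator (A - N) y \<partial>lborel) + emeasure \<mu> (A \<inter> N)"
    and x0_in: "x0 \<in> {0<..<1}"
    and leb: "lebesgue_point f x0"
    and fpos: "f x0 > 0"
  shows "density_tends (accum_points P) x0 1 \<and> density_tends (nonaccum_points P) x0 0"
proof -
  interpret weak_limit_with_density P \<mu> f N
    by (intro weak_limit_with_density.intro weak_limit_of_partitions.intro
        weak_limit_with_density_axioms.intro)
      (fact part prob sets_mu weak f_meas f_nonneg N_borel N_null decomp)+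
  have B_borel: "nonaccum_points P \<in> sets borel"
    using accum_points_borel[OF part] unfolding nonaccum_points_def by simp
  have "density_tends (nonaccum_points P) x0 0"
    using density_tends_zero_at_lebesgue_point[OF leb _ f_meas open_greaterThanLessThan x0_in f_int
        B_borel AE_zero_on_nonaccum_points] fpos by simp
  moreover have "accum_points P = {0<..<1} - nonaccum_points P"
    unfolding nonaccum_points_def accum_points_def by blast
  ultimately show ?thesis
    using density_tends_Diff_one[OF open_greaterThanLessThan x0_in] B_borel by auto
qed

end
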